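(* Let $\Gamma$ be a connected finite simple graph on $N\ge3$ vertices whose minimum vertex degree $d$ satisfies $d\ge3$. Then $\varepsilon\le\frac{\sqrt{d-1}}{d}<\frac12$.
   Context: For a finite simple graph $\Gamma=(V,E)$ without isolated vertices, $\deg v$ is the number of neighbours of $v$ and $\mathcal N(v)=\{w\in V: w\sim v\}$. The normalized Laplacian acts on functions $f:V\to\mathbb R$ by $\Delta f(v)=f(v)-\frac{1}{\deg v}\sum_{w\sim v}f(w)$; its eigenvalues are $0=\lambda_1\le\lambda_2\le\dots\le\lambda_N$, and $\varepsilon:=\min_i|1-\lambda_i|$. $d$ denotes the minimum vertex degree. *)

theory Defs
  imports Complex_Main
begin

definition simple_graph :: "'a set \<Rightarrow> ('a \<Rightarrow> 'a \<Rightarrow> bool) \<Rightarrow> bool" where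
  "simple_graph V E \<longleftrightarrow> finite V \<and> (\<forall>x y. E x y \<longrightarrow> x \<in> V \<and> y \<in> V)
     \<and> (\<forall>x y. E x y \<longrightarrow> E y x) \<and> (\<forall>x. \<not> E x x)"

definition graph_connected :: "'a set \<Rightarrow> ('a \<Rightarrow> 'a \<Rightarrow> bool) \<Rightarrow> bool" where
  "graph_connected V E \<longleftrightarrow> (\<forall>x\<in>V. \<forall>y\<in>V. E\<^sup>*\<^sup>* x y)"

definition nbrs :: "'a set \<Rightarrow> ('a \<Rightarrow> 'a \<Rightarrow> bool) \<Rightarrow> 'a \<Rightarrow> 'a set" where
  "nbrs V E v = {w\<in>V. E v w}"

definition deg :: "'a set \<Rightarrow> ('a \<Rightarrow> 'a \<Rightarrow> bool) \<Rightarrow> 'a \<Rightarrow> nat" where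
  "deg V E v = card (nbrs V E v)"

definition min_deg :: "'a set \<Rightarrow> ('a \<Rightarrow> 'a \<Rightarrow> bool) \<Rightarrow> nat" where
  "min_deg V E = Min (deg V E ` V)"

definition norm_lap :: "'a set \<Rightarrow> ('a \<Rightarrow> 'a \<Rightarrow> bool) \<Rightarrow> ('a \<Rightarrow> real) \<Rightarrow> 'a \<Rightarrow> real" where
  "norm_lap V E f v = f v - (\<Sum>w\<in>nbrs V E v. f w) / real (deg V E v)"

definition lap_eigenvalue :: "'a set \<Rightarrow> ('a \<Rightarrow> 'a \<Rightarrow> bool) \<Rightarrow> real \<Rightarrow> bool" where
  "lap_eigenvalue V E mu \<longleftrightarrow>
     (\<exists>f. (\<exists>v\<in>V. f v \<noteq> 0) \<and> (\<forall>v\<in>V. norm_lap V E f v = mu * f v))"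

definition spectral_eps :: "'a set \<Rightarrow> ('a \<Rightarrow> 'a \<Rightarrow> bool) \<Rightarrow> real" where
  "spectral_eps V E = Min {\<bar>1 - mu\<bar> | mu. lap_eigenvalue V E mu}"

end

theory Submission
  imports Defs "Jordan_Normal_Form.Schur_Decomposition"
begin

text \<open>
  The random walk matrix \<open>P\<close> of the graph satisfies \<open>\<Delta> = I - P\<close>, so its eigenvalues are
  \<open>t\<^sub>i = 1 - \<lambda>\<^sub>i\<close>. Since \<open>P\<close> is stochastic and reversible with respect to the degrees,
  the \<open>t\<^sub>i\<close> are real with \<open>\<bar>t\<^sub>i\<bar> \<le> 1\<close>, and the traces of \<open>P\<^sup>2\<close> and \<open>P\<^sup>4\<close> are
  \<open>\<Sum> t\<^sub>i\<^sup>2\<close> and \<open>\<Sum> t\<^sub>i\<^sup>4\<close>. As every transition probability is at most \<open>1/d\<close>,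
  counting closed walks gives \<open>tr P\<^sup>2 \<le> N/d\<close>, and keeping only the closed walks of the
  shape \<open>v u w u v\<close> gives \<open>tr P\<^sup>4 \<ge> (1 + \<beta>) tr P\<^sup>2 - \<beta> N\<close> with \<open>\<beta> = (d - 1)/d\<^sup>2\<close>
  (here \<open>d \<ge> 3\<close> is used). If all \<open>t\<^sub>i\<^sup>2 > \<beta>\<close>, the nonnegative sum
  \<open>\<Sum> (t\<^sub>i\<^sup>2 - \<beta>)(1 - t\<^sub>i\<^sup>2)\<close> is at most \<open>0\<close> by these bounds, forcing every \<open>t\<^sub>i\<^sup>2 = 1\<close>,
  which contradicts \<open>tr P\<^sup>2 \<le> N/d < N\<close>. Hence some \<open>\<bar>t\<^sub>i\<bar> \<le> \<surd>\<beta> = \<surd>(d - 1)/d\<close>.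
\<close>

section \<open>Traces of powers of complex matrices\<close>

definition mat_trace :: "'a::comm_ring_1 mat \<Rightarrow> 'a" where
  "mat_trace X = (\<Sum>i<dim_row X. X $$ (i,i))"

lemma mat_trace_mult_comm:
  assumes "X \<in> carrier_mat n m" "Y \<in> carrier_mat m n"
  shows "mat_trace (X * Y) = mat_trace (Y * X)"
proof -
  have "mat_trace (X * Y) = (\<Sum>i<n. \<Sum>k<m. X $$ (i,k) * Y $$ (k,i))"
    using assms by (simp add: mat_trace_def scalar_prod_def lessThan_atLeast0)
  also have "\<dots> = (\<Sum>k<m. \<Sum>i<n. Y $$ (k,i) * X $$ (i,k))"
    by (subst sum.swap) (simp add: mult.commute)
  also have "\<dots> = mat_trace (Y * X)"
    using assms by (simp add: mat_trace_def scalar_prod_def lessThan_atLeast0)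
  finally show ?thesis .
qed

lemma mat_trace_similar:
  assumes "similar_mat_wit A B P Q"
  shows "mat_trace A = mat_trace B"
proof -
  define n where "n = dim_row A"
  from similar_mat_witD[OF n_def assms]
  have B: "B \<in> carrier_mat n n" and P: "P \<in> carrier_mat n n" and Q: "Q \<in> carrier_mat n n"
    and QP: "Q * P = 1\<^sub>m n" and A: "A = P * B * Q" by auto
  have "mat_trace A = mat_trace (P * (B * Q))" using A B P Q by (simp add: assoc_mult_mat)
  also have "\<dots> = mat_trace (B * Q * P)"
    using B P Q by (subst mat_trace_mult_comm[of _ n n]) (auto simp: assoc_mult_mat)
  also have "B * Q * P = B" using B P Q QP by (simp add: assoc_mult_mat)
  finally show ?thesis .
qed

lemma upper_triangular_mult:
  fixes X Y :: "'a::comm_ring_1 mat"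
  assumes "X \<in> carrier_mat n n" "Y \<in> carrier_mat n n" "upper_triangular X" "upper_triangular Y"
  shows "upper_triangular (X * Y)"
    and "i < n \<Longrightarrow> (X * Y) $$ (i,i) = X $$ (i,i) * Y $$ (i,i)"
proof -
  have entry: "(X * Y) $$ (i,j) = (\<Sum>k<n. X $$ (i,k) * Y $$ (k,j))" if "i < n" "j < n" for i j
    using assms that by (simp add: scalar_prod_def lessThan_atLeast0)
  have vanish: "X $$ (i,k) * Y $$ (k,j) = 0" if "k < n" "i < n" "k \<noteq> i \<or> k \<noteq> j" "j \<le> i" for i j k
    using upper_triangularD[OF assms(3), of k i] upper_triangularD[OF assms(4), of j k] assms that
    by (cases "k < i") auto
  show "upper_triangular (X * Y)"
  proof
    fix i j assume ij: "j < i" "i < dim_row (X * Y)"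
    then have "(X * Y) $$ (i,j) = (\<Sum>k<n. X $$ (i,k) * Y $$ (k,j))"
      using assms by (intro entry) auto
    also have "\<dots> = 0"
      using ij assms by (intro sum.neutral) (auto intro: vanish)
    finally show "(X * Y) $$ (i,j) = 0" .
  qed
  show "(X * Y) $$ (i,i) = X $$ (i,i) * Y $$ (i,i)" if "i < n"
  proof -
    have "(X * Y) $$ (i,i) = X $$ (i,i) * Y $$ (i,i) + (\<Sum>k\<in>{..<n} - {i}. X $$ (i,k) * Y $$ (k,i))"
      using that by (simp only: entry sum.remove[of "{..<n}" i, simplified])
    also have "(\<Sum>k\<in>{..<n} - {i}. X $$ (i,k) * Y $$ (k,i)) = 0"
      using that by (intro sum.neutral) (auto intro: vanish)
    finally show ?thesis by simp
  qed
qed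

lemma upper_triangular_pow:
  fixes B :: "'a::comm_ring_1 mat"
  assumes "B \<in> carrier_mat n n" "upper_triangular B"
  shows "upper_triangular (B ^\<^sub>m k) \<and> (\<forall>i<n. (B ^\<^sub>m k) $$ (i,i) = B $$ (i,i) ^ k)"
proof (induction k)
  case 0
  show ?case using assms by auto
next
  case (Suc k)
  then show ?case
    using upper_triangular_mult[OF pow_carrier_mat[OF assms(1)] assms(1) _ assms(2), of k] by auto
qed

lemma pow_mat_add:
  assumes "A \<in> carrier_mat n n"
  shows "A ^\<^sub>m (k + l) = A ^\<^sub>m k * A ^\<^sub>m l"
proof (induction l)
  case 0
  then show ?case using assms by simp
next
  case (Suc l)
  then show ?case
    using assms by (simp add: assoc_mult_mat[of _ n n _ n _ n])
qed

lemma mat_trace_pow_eq_sum_eigenvalues: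
  fixes A :: "complex mat"
  assumes A: "A \<in> carrier_mat n n" and es: "char_poly A = (\<Prod>a\<leftarrow>es. [:- a, 1:])"
  shows "mat_trace (A ^\<^sub>m k) = (\<Sum>i<n. (es ! i) ^ k)"
proof -
  obtain B P Q where "schur_decomposition A es = (B,P,Q)" by (cases "schur_decomposition A es") auto
  from schur_decomposition[OF A es this]
  have sim: "similar_mat_wit A B P Q" and ut: "upper_triangular B" and diag: "diag_mat B = es"
    by auto
  have B: "B \<in> carrier_mat n n" using similar_mat_witD2[OF A sim] by auto
  have "mat_trace (A ^\<^sub>m k) = mat_trace (B ^\<^sub>m k)"
    by (rule mat_trace_similar[OF similar_mat_wit_pow[OF sim]])
  also have "\<dots> = (\<Sum>i<n. B $$ (i,i) ^ k)"
    using B upper_triangular_pow[OF B ut] by (simp add: mat_trace_def)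
  also have "\<dots> = (\<Sum>i<n. (es ! i) ^ k)"
    using B by (simp add: diag[symmetric] diag_mat_def)
  finally show ?thesis .
qed

lemma finite_eigenvalues:
  fixes A :: "'a::field mat"
  assumes "A \<in> carrier_mat n n"
  shows "finite {e. eigenvalue A e}"
proof -
  have "char_poly A \<noteq> 0" using degree_monic_char_poly[OF assms] by auto
  then show ?thesis
    using poly_roots_finite eigenvalue_root_char_poly[OF assms] by simp
qed

section \<open>Real matrices given by their entries\<close>

definition complex_mat_of :: "nat \<Rightarrow> (nat \<Rightarrow> nat \<Rightarrow> real) \<Rightarrow> complex mat" where
  "complex_mat_of n A = mat n n (\<lambda>(i,j). complex_of_real (A i j))"

lemma complex_mat_of_carrier [simp]: "complex_mat_of n A \<in> carrier_mat n n"
  by (simp add: complex_mat_of_def)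

lemma complex_mat_of_mult:
  "complex_mat_of n A * complex_mat_of n B = complex_mat_of n (\<lambda>i k. \<Sum>j<n. A i j * B j k)"
  by (rule eq_matI) (auto simp: complex_mat_of_def scalar_prod_def lessThan_atLeast0)

lemma mat_trace_complex_mat_of: "mat_trace (complex_mat_of n A) = complex_of_real (\<Sum>i<n. A i i)"
  by (simp add: mat_trace_def complex_mat_of_def)

lemma complex_mat_of_mult_vec:
  assumes "z \<in> carrier_vec n" "i < n"
  shows "(complex_mat_of n A *\<^sub>v z) $ i = (\<Sum>j<n. complex_of_real (A i j) * z $ j)"
  using assms by (simp add: complex_mat_of_def scalar_prod_def lessThan_atLeast0)

definition real_eigenvector :: "nat \<Rightarrow> (nat \<Rightarrow> nat \<Rightarrow> real) \<Rightarrow> real \<Rightarrow> (nat \<Rightarrow> real) \<Rightarrow> bool" where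
  "real_eigenvector n A e f \<longleftrightarrow> (\<exists>i<n. f i \<noteq> 0) \<and> (\<forall>i<n. (\<Sum>j<n. A i j * f j) = e * f i)"

lemma eigenvalue_complex_mat_of_iff:
  "eigenvalue (complex_mat_of n A) z \<longleftrightarrow>
     (\<exists>v. (\<exists>i<n. v i \<noteq> 0) \<and> (\<forall>i<n. (\<Sum>j<n. complex_of_real (A i j) * v j) = z * v i))"
proof
  assume "eigenvalue (complex_mat_of n A) z"
  then obtain v where v: "v \<in> carrier_vec n" "v \<noteq> 0\<^sub>v n" "complex_mat_of n A *\<^sub>v v = z \<cdot>\<^sub>v v"
    unfolding eigenvalue_def eigenvector_def by (auto simp: complex_mat_of_def)
  have "\<exists>i<n. v $ i \<noteq> 0"
    using v(1,2) by (metis eq_vecI carrier_vecD index_zero_vec)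
  moreover have "(\<Sum>j<n. complex_of_real (A i j) * v $ j) = z * v $ i" if "i < n" for i
    using arg_cong[OF v(3), of "\<lambda>u. u $ i"] complex_mat_of_mult_vec[OF v(1) that] v(1) that
    by simp
  ultimately show "\<exists>v. (\<exists>i<n. v i \<noteq> 0) \<and> (\<forall>i<n. (\<Sum>j<n. complex_of_real (A i j) * v j) = z * v i)"
    by (intro exI[of _ "\<lambda>i. v $ i"]) auto
next
  assume "\<exists>v. (\<exists>i<n. v i \<noteq> 0) \<and> (\<forall>i<n. (\<Sum>j<n. complex_of_real (A i j) * v j) = z * v i)"
  then obtain v where nz: "\<exists>i<n. v i \<noteq> 0"
    and eq: "\<And>i. i < n \<Longrightarrow> (\<Sum>j<n. complex_of_real (A i j) * v j) = z * v i" by blast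
  define u where "u = vec n v"
  have u: "u \<in> carrier_vec n" by (simp add: u_def)
  have "u \<noteq> 0\<^sub>v n" using nz by (auto simp: u_def vec_eq_iff)
  moreover have "complex_mat_of n A *\<^sub>v u = z \<cdot>\<^sub>v u"
  proof (rule eq_vecI)
    fix i assume "i < dim_vec (z \<cdot>\<^sub>v u)"
    then show "(complex_mat_of n A *\<^sub>v u) $ i = (z \<cdot>\<^sub>v u) $ i"
      using eq complex_mat_of_mult_vec[OF u, of i A] by (simp add: u_def)
  qed (simp add: complex_mat_of_def u_def)
  ultimately show "eigenvalue (complex_mat_of n A) z"
    using u unfolding eigenvalue_def eigenvector_def by (auto simp: complex_mat_of_def)
qed

lemma eigenvalue_of_real_iff_real_eigenvector:
  "eigenvalue (complex_mat_of n A) (complex_of_real e) \<longleftrightarrow> (\<exists>f. real_eigenvector n A e f)"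
proof
  assume "eigenvalue (complex_mat_of n A) (complex_of_real e)"
  then obtain v where nz: "\<exists>i<n. v i \<noteq> 0"
    and eq: "\<And>i. i < n \<Longrightarrow> (\<Sum>j<n. complex_of_real (A i j) * v j) = complex_of_real e * v i"
    unfolding eigenvalue_complex_mat_of_iff by blast
  have re: "(\<Sum>j<n. A i j * Re (v j)) = e * Re (v i)"
    and im: "(\<Sum>j<n. A i j * Im (v j)) = e * Im (v i)" if "i < n" for i
    using arg_cong[OF eq[OF that], of Re] arg_cong[OF eq[OF that], of Im]
    by (simp_all add: Re_sum Im_sum)
  from nz obtain i where i: "i < n" "Re (v i) \<noteq> 0 \<or> Im (v i) \<noteq> 0"
    using complex_eqI[of _ 0] by auto
  show "\<exists>f. real_eigenvector n A e f"
  proof (cases "Re (v i) = 0")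
    case True
    then show ?thesis
      using i im unfolding real_eigenvector_def by (intro exI[of _ "\<lambda>j. Im (v j)"]) auto
  next
    case False
    then show ?thesis
      using i re unfolding real_eigenvector_def by (intro exI[of _ "\<lambda>j. Re (v j)"]) auto
  qed
next
  assume "\<exists>f. real_eigenvector n A e f"
  then obtain f where f: "real_eigenvector n A e f" ..
  have "(\<Sum>j<n. complex_of_real (A i j) * complex_of_real (f j)) = complex_of_real e * complex_of_real (f i)"
    if "i < n" for i
  proof -
    have "(\<Sum>j<n. A i j * f j) = e * f i" using f that by (simp add: real_eigenvector_def)
    then have "complex_of_real (\<Sum>j<n. A i j * f j) = complex_of_real (e * f i)" by (rule arg_cong)
    then show ?thesis by simp
  qed
  moreover have "\<exists>i<n. complex_of_real (f i) \<noteq> 0"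
    using f unfolding real_eigenvector_def by simp
  ultimately show "eigenvalue (complex_mat_of n A) (complex_of_real e)"
    unfolding eigenvalue_complex_mat_of_iff
    by (intro exI[of _ "\<lambda>j. complex_of_real (f j)"] conjI) auto
qed

lemma sum_mult_le_sum_mult_sum:
  fixes a b :: "'i \<Rightarrow> real"
  assumes "finite S" "\<And>j. j \<in> S \<Longrightarrow> 0 \<le> a j" "\<And>j. j \<in> S \<Longrightarrow> 0 \<le> b j"
  shows "(\<Sum>j\<in>S. a j * b j) \<le> (\<Sum>j\<in>S. a j) * (\<Sum>j\<in>S. b j)"
proof -
  have "(\<Sum>j\<in>S. a j * b j) \<le> (\<Sum>j\<in>S. a j * (\<Sum>l\<in>S. b l))"
    by (intro sum_mono mult_left_mono member_le_sum) (use assms in auto)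
  also have "\<dots> = (\<Sum>j\<in>S. a j) * (\<Sum>j\<in>S. b j)" by (simp add: sum_distrib_right)
  finally show ?thesis .
qed

lemma exists_sq_le_of_moments:
  fixes t :: "'i \<Rightarrow> real"
  assumes "finite I" and bounded: "\<And>i. i \<in> I \<Longrightarrow> \<bar>t i\<bar> \<le> 1"
    and second: "(\<Sum>i\<in>I. (t i)\<^sup>2) < card I"
    and fourth: "(1 + \<beta>) * (\<Sum>i\<in>I. (t i)\<^sup>2) - \<beta> * card I \<le> (\<Sum>i\<in>I. (t i) ^ 4)"
  shows "\<exists>i\<in>I. (t i)\<^sup>2 \<le> \<beta>"
proof (rule ccontr)
  assume "\<not> ?thesis"
  then have big: "\<beta> < (t i)\<^sup>2" if "i \<in> I" for i
    using that by (simp add: not_le)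
  define p where "p x = (x\<^sup>2 - \<beta>) * (1 - x\<^sup>2)" for x :: real
  have p_nonneg: "0 \<le> p (t i)" if "i \<in> I" for i
  proof -
    have "(t i)\<^sup>2 \<le> 1" using bounded[OF that] by (simp add: abs_square_le_1)
    then show ?thesis using big[OF that] unfolding p_def by (intro mult_nonneg_nonneg) auto
  qed
  have "p x = (1 + \<beta>) * x\<^sup>2 - \<beta> - x ^ 4" for x
    unfolding p_def by (simp add: algebra_simps power4_eq_xxxx power2_eq_square)
  then have "(\<Sum>i\<in>I. p (t i)) = (1 + \<beta>) * (\<Sum>i\<in>I. (t i)\<^sup>2) - \<beta> * card I - (\<Sum>i\<in>I. (t i) ^ 4)"
    by (simp add: sum_subtractf sum_distrib_left)
  also have "\<dots> \<le> 0" using fourth by simp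
  finally have sum_zero: "(\<Sum>i\<in>I. p (t i)) = 0"
    using p_nonneg by (intro antisym sum_nonneg) auto
  have "(t i)\<^sup>2 = 1" if "i \<in> I" for i
  proof -
    have "p (t i) = 0"
      using sum_nonneg_eq_0_iff[OF \<open>finite I\<close>, of "\<lambda>i. p (t i)"] p_nonneg sum_zero that by simp
    then show ?thesis using big[OF that] by (simp add: p_def)
  qed
  then have "(\<Sum>i\<in>I. (t i)\<^sup>2) = card I" by simp
  with second show False by simp
qed

section \<open>Stochastic matrices\<close>

locale stochastic_matrix =
  fixes n :: nat and A :: "nat \<Rightarrow> nat \<Rightarrow> real"
  assumes nonneg: "\<And>i j. i < n \<Longrightarrow> j < n \<Longrightarrow> 0 \<le> A i j"
    and row_sum: "\<And>i. i < n \<Longrightarrow> (\<Sum>j<n. A i j) = 1"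
begin

lemma eigenvalue_norm_le_1:
  assumes "eigenvalue (complex_mat_of n A) z"
  shows "cmod z \<le> 1"
proof -
  from assms obtain v where nz: "\<exists>i<n. v i \<noteq> 0"
    and eq: "\<And>i. i < n \<Longrightarrow> (\<Sum>j<n. complex_of_real (A i j) * v j) = z * v i"
    unfolding eigenvalue_complex_mat_of_iff by blast
  obtain m where m: "m < n" "\<And>j. j < n \<Longrightarrow> cmod (v j) \<le> cmod (v m)"
  proof -
    have "(\<lambda>j. cmod (v j)) ` {..<n} \<noteq> {}" using nz by auto
    from Max_in[OF finite_imageI[OF finite_lessThan] this]
    obtain m where "m < n" "cmod (v m) = Max ((\<lambda>j. cmod (v j)) ` {..<n})" by auto
    then show ?thesis using that by simp
  qed
  have "cmod z * cmod (v m) = cmod (\<Sum>j<n. complex_of_real (A m j) * v j)"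
    using eq[OF m(1)] by (simp add: norm_mult)
  also have "\<dots> \<le> (\<Sum>j<n. A m j * cmod (v j))"
    by (rule order_trans[OF norm_sum]) (simp add: norm_mult nonneg m(1))
  also have "\<dots> \<le> (\<Sum>j<n. A m j * cmod (v m))"
    by (intro sum_mono mult_left_mono) (use m nonneg in auto)
  also have "\<dots> = cmod (v m)"
    using row_sum[OF m(1)] by (simp add: sum_distrib_right[symmetric])
  finally have "cmod z * cmod (v m) \<le> cmod (v m)" .
  moreover have "cmod (v m) > 0"
    using nz m by (auto intro: less_le_trans)
  ultimately show ?thesis by simp
qed

definition two_step :: "nat \<Rightarrow> nat \<Rightarrow> real" where
  "two_step i k = (\<Sum>j<n. A i j * A j k)"

definition round_trip :: "nat \<Rightarrow> nat \<Rightarrow> real" where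
  "round_trip j i = A j i * A i j"

lemma two_step_diag_eq: "two_step j j = (\<Sum>i<n. round_trip j i)"
  by (simp add: two_step_def round_trip_def mult.commute)

lemma round_trip_nonneg: "j < n \<Longrightarrow> i < n \<Longrightarrow> 0 \<le> round_trip j i"
  by (simp add: round_trip_def nonneg)

lemma two_step_product_ge:
  assumes "i < n" "k < n"
  shows "(\<Sum>j<n. round_trip j i * round_trip j k) \<le> two_step i k * two_step k i"
proof -
  have "(\<Sum>j<n. round_trip j i * round_trip j k) = (\<Sum>j<n. (A i j * A j k) * (A k j * A j i))"
    by (simp add: round_trip_def algebra_simps)
  also have "\<dots> \<le> two_step i k * two_step k i"
    unfolding two_step_def by (intro sum_mult_le_sum_mult_sum) (use nonneg assms in auto)
  finally show ?thesis .
qed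

lemma sum_two_step_products_ge:
  "2 * (\<Sum>j<n. (two_step j j)\<^sup>2) - (\<Sum>i<n. \<Sum>j<n. (round_trip j i)\<^sup>2)
     \<le> (\<Sum>i<n. \<Sum>k<n. two_step i k * two_step k i)"
proof -
  \<comment> \<open>\<open>g i k\<close> is the weight of the closed walks \<open>i j k j i\<close>; it bounds the terms with \<open>k \<noteq> i\<close>,
    while the term \<open>k = i\<close> is kept exactly\<close>
  define g where "g i k = (\<Sum>j<n. round_trip j i * round_trip j k)" for i k
  have row: "(\<Sum>k<n. g i k) - g i i + (two_step i i)\<^sup>2 \<le> (\<Sum>k<n. two_step i k * two_step k i)"
    if "i < n" for i
  proof -
    have "(\<Sum>k<n. g i k) - g i i + (two_step i i)\<^sup>2
        = (\<Sum>k<n. if k = i then (two_step i i)\<^sup>2 else g i k)"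
      using that by (simp add: sum.remove[of "{..<n}" i] sum.If_cases Diff_eq)
    also have "\<dots> \<le> (\<Sum>k<n. two_step i k * two_step k i)"
      using that two_step_product_ge[OF that]
      by (intro sum_mono) (auto simp: g_def power2_eq_square)
    finally show ?thesis .
  qed
  have "(\<Sum>i<n. \<Sum>k<n. g i k) = (\<Sum>i<n. \<Sum>j<n. \<Sum>k<n. round_trip j i * round_trip j k)"
    unfolding g_def by (intro sum.cong refl sum.swap)
  also have "\<dots> = (\<Sum>j<n. \<Sum>i<n. \<Sum>k<n. round_trip j i * round_trip j k)"
    by (rule sum.swap)
  also have "\<dots> = (\<Sum>j<n. (two_step j j)\<^sup>2)"
    by (simp add: two_step_diag_eq power2_eq_square sum_product)
  finally have "(\<Sum>i<n. \<Sum>k<n. g i k) = (\<Sum>j<n. (two_step j j)\<^sup>2)" .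
  moreover have "(\<Sum>i<n. g i i) = (\<Sum>i<n. \<Sum>j<n. (round_trip j i)\<^sup>2)"
    by (simp add: g_def power2_eq_square)
  moreover have "(\<Sum>i<n. (\<Sum>k<n. g i k) - g i i + (two_step i i)\<^sup>2)
      \<le> (\<Sum>i<n. \<Sum>k<n. two_step i k * two_step k i)"
    using row by (intro sum_mono) auto
  then have "(\<Sum>i<n. \<Sum>k<n. g i k) - (\<Sum>i<n. g i i) + (\<Sum>i<n. (two_step i i)\<^sup>2)
      \<le> (\<Sum>i<n. \<Sum>k<n. two_step i k * two_step k i)"
    by (simp only: sum.distrib sum_subtractf)
  ultimately show ?thesis by linarith
qed

lemma sum_round_trip_sq_le:
  assumes entry_le: "\<And>i j. i < n \<Longrightarrow> j < n \<Longrightarrow> A i j \<le> 1 / d"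
  shows "(\<Sum>i<n. \<Sum>j<n. (round_trip j i)\<^sup>2) \<le> (\<Sum>j<n. two_step j j) / d\<^sup>2"
proof -
  have round_trip_le: "round_trip j i \<le> 1 / d\<^sup>2" if "j < n" "i < n" for i j
  proof -
    have "0 \<le> 1 / d" using nonneg[OF that] entry_le[OF that] by linarith
    then have "A j i * A i j \<le> (1 / d) * (1 / d)"
      by (intro mult_mono) (use nonneg entry_le that in auto)
    then show ?thesis by (simp add: round_trip_def power2_eq_square)
  qed
  have "(\<Sum>i<n. \<Sum>j<n. (round_trip j i)\<^sup>2) = (\<Sum>j<n. \<Sum>i<n. round_trip j i * round_trip j i)"
    unfolding power2_eq_square by (rule sum.swap)
  also have "\<dots> \<le> (\<Sum>j<n. \<Sum>i<n. round_trip j i * (1 / d\<^sup>2))"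
    by (intro sum_mono mult_left_mono round_trip_le round_trip_nonneg) auto
  also have "\<dots> = (\<Sum>j<n. two_step j j) / d\<^sup>2"
    by (simp add: two_step_diag_eq sum_divide_distrib)
  finally show ?thesis .
qed

lemma two_step_diag_le:
  assumes entry_le: "\<And>i j. i < n \<Longrightarrow> j < n \<Longrightarrow> A i j \<le> 1 / d" and "j < n"
  shows "two_step j j \<le> 1 / d"
proof -
  have "two_step j j \<le> (\<Sum>i<n. A j i * (1 / d))"
    unfolding two_step_def by (intro sum_mono mult_left_mono) (use nonneg entry_le assms(2) in auto)
  also have "\<dots> = 1 / d"
    using row_sum[OF assms(2)] by (simp add: sum_divide_distrib[symmetric])
  finally show ?thesis .
qed

lemma sum_two_step_diag_le:
  assumes "\<And>i j. i < n \<Longrightarrow> j < n \<Longrightarrow> A i j \<le> 1 / d"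
  shows "(\<Sum>j<n. two_step j j) \<le> n / d"
  using sum_mono[of "{..<n}" "\<lambda>j. two_step j j" "\<lambda>_. 1 / d"] two_step_diag_le[OF assms] by simp

lemma sum_two_step_products_lower_bound:
  assumes entry_le: "\<And>i j. i < n \<Longrightarrow> j < n \<Longrightarrow> A i j \<le> 1 / d" and "3 \<le> d"
  defines "\<beta> \<equiv> (d - 1) / d\<^sup>2"
  shows "(1 + \<beta>) * (\<Sum>j<n. two_step j j) - \<beta> * n \<le> (\<Sum>i<n. \<Sum>k<n. two_step i k * two_step k i)"
proof -
  have pointwise: "(1 + \<beta>) * x - \<beta> \<le> 2 * x\<^sup>2 - x / d\<^sup>2" if "0 \<le> x" "x \<le> 1 / d" for x
  proof -
    have factored: "2 * x\<^sup>2 - x / d\<^sup>2 - ((1 + \<beta>) * x - \<beta>) = 2 * ((1/d - x) * ((d - 1) / (2 * d) - x))"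
      using \<open>3 \<le> d\<close> by (simp add: \<beta>_def field_simps power2_eq_square)
    have "1 / d \<le> (d - 1) / (2 * d)" using \<open>3 \<le> d\<close> by (simp add: field_simps)
    then have "0 \<le> (1/d - x) * ((d - 1) / (2 * d) - x)"
      using that by (intro mult_nonneg_nonneg) auto
    with factored show ?thesis by linarith
  qed
  have "0 \<le> two_step j j" if "j < n" for j
    unfolding two_step_def using nonneg that by (auto intro!: sum_nonneg)
  then have "(\<Sum>j<n. (1 + \<beta>) * two_step j j - \<beta>) \<le> (\<Sum>j<n. 2 * (two_step j j)\<^sup>2 - two_step j j / d\<^sup>2)"
    using two_step_diag_le[OF entry_le] by (intro sum_mono pointwise) auto
  moreover have "(\<Sum>j<n. (1 + \<beta>) * two_step j j - \<beta>) = (1 + \<beta>) * (\<Sum>j<n. two_step j j) - \<beta> * n"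
    by (simp add: sum_subtractf sum_distrib_left)
  moreover have "(\<Sum>j<n. 2 * (two_step j j)\<^sup>2 - two_step j j / d\<^sup>2)
      = 2 * (\<Sum>j<n. (two_step j j)\<^sup>2) - (\<Sum>j<n. two_step j j) / d\<^sup>2"
    by (simp add: sum_subtractf sum_distrib_left sum_divide_distrib)
  ultimately show ?thesis
    using sum_two_step_products_ge sum_round_trip_sq_le[OF entry_le] by linarith
qed

lemma complex_mat_pow_2: "complex_mat_of n A ^\<^sub>m 2 = complex_mat_of n two_step"
  by (simp add: numeral_2_eq_2 complex_mat_of_mult two_step_def[abs_def])

lemma mat_trace_complex_mat_pow_2:
  "mat_trace (complex_mat_of n A ^\<^sub>m 2) = complex_of_real (\<Sum>j<n. two_step j j)"
  by (simp add: complex_mat_pow_2 mat_trace_complex_mat_of)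

lemma mat_trace_complex_mat_pow_4:
  "mat_trace (complex_mat_of n A ^\<^sub>m 4)
     = complex_of_real (\<Sum>i<n. \<Sum>k<n. two_step i k * two_step k i)"
proof -
  have "complex_mat_of n A ^\<^sub>m 4 = complex_mat_of n A ^\<^sub>m 2 * complex_mat_of n A ^\<^sub>m 2"
    using pow_mat_add[OF complex_mat_of_carrier, of n A 2 2] by simp
  then show ?thesis
    by (simp add: complex_mat_pow_2 complex_mat_of_mult mat_trace_complex_mat_of)
qed

end

locale reversible_stochastic_matrix = stochastic_matrix +
  fixes w :: "nat \<Rightarrow> real"
  assumes weight_pos: "\<And>i. i < n \<Longrightarrow> 0 < w i"
    and detailed_balance: "\<And>i j. i < n \<Longrightarrow> j < n \<Longrightarrow> w i * A i j = w j * A j i"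
begin

lemma eigenvalue_real:
  assumes "eigenvalue (complex_mat_of n A) z"
  shows "Im z = 0"
proof -
  from assms obtain v where nz: "\<exists>i<n. v i \<noteq> 0"
    and eq: "\<And>i. i < n \<Longrightarrow> (\<Sum>j<n. complex_of_real (A i j) * v j) = z * v i"
    unfolding eigenvalue_complex_mat_of_iff by blast
  define S where "S = (\<Sum>i<n. \<Sum>j<n. complex_of_real (w i * A i j) * (cnj (v i) * v j))"
  define W where "W = (\<Sum>i<n. w i * (cmod (v i))\<^sup>2)"
  have "S = (\<Sum>i<n. complex_of_real (w i) * cnj (v i) * (\<Sum>j<n. complex_of_real (A i j) * v j))"
    unfolding S_def by (simp add: sum_distrib_left algebra_simps)
  also have "\<dots> = (\<Sum>i<n. complex_of_real (w i) * cnj (v i) * (z * v i))"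
    by (intro sum.cong refl) (simp add: eq)
  also have "\<dots> = z * (\<Sum>i<n. complex_of_real (w i) * (v i * cnj (v i)))"
    by (simp add: sum_distrib_left algebra_simps)
  also have "\<dots> = z * complex_of_real W"
    unfolding W_def by (simp add: complex_norm_square[symmetric] mult.commute)
  finally have S_eq: "S = z * complex_of_real W" .
  have "cnj S = (\<Sum>i<n. \<Sum>j<n. complex_of_real (w i * A i j) * (v i * cnj (v j)))"
    unfolding S_def by simp
  also have "\<dots> = (\<Sum>j<n. \<Sum>i<n. complex_of_real (w i * A i j) * (v i * cnj (v j)))"
    by (rule sum.swap)
  also have "\<dots> = S"
    unfolding S_def by (intro sum.cong refl) (simp add: detailed_balance mult.commute)
  finally have "Im S = 0" by (metis cnj.sel(2) neg_equal_zero)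
  moreover have "W > 0"
  proof -
    obtain i where "i < n" "v i \<noteq> 0" using nz by blast
    then have "0 < w i * (cmod (v i))\<^sup>2" using weight_pos by simp
    also have "\<dots> \<le> W"
      unfolding W_def using \<open>i < n\<close> weight_pos
      by (intro member_le_sum) (auto intro!: mult_nonneg_nonneg simp: less_imp_le)
    finally show ?thesis .
  qed
  ultimately show ?thesis using S_eq by simp
qed

lemma real_spectrum:
  obtains t :: "nat \<Rightarrow> real"
  where "\<And>i. i < n \<Longrightarrow> eigenvalue (complex_mat_of n A) (complex_of_real (t i))"
    and "\<And>i. i < n \<Longrightarrow> \<bar>t i\<bar> \<le> 1"
    and "(\<Sum>i<n. (t i)\<^sup>2) = (\<Sum>j<n. two_step j j)"
    and "(\<Sum>i<n. (t i) ^ 4) = (\<Sum>i<n. \<Sum>k<n. two_step i k * two_step k i)"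
proof -
  let ?C = "complex_mat_of n A"
  obtain es where es: "char_poly ?C = (\<Prod>a\<leftarrow>es. [:- a, 1:])" "length es = n"
    using char_poly_factorized[OF complex_mat_of_carrier] by blast
  have eigenvalue: "eigenvalue ?C (es ! i)" if "i < n" for i
    using that es linear_poly_root[of "es ! i" es] eigenvalue_root_char_poly[OF complex_mat_of_carrier]
    by simp
  define t where "t i = Re (es ! i)" for i
  have es_real: "es ! i = complex_of_real (t i)" if "i < n" for i
    using eigenvalue_real[OF eigenvalue[OF that]] by (simp add: t_def complex_eq_iff)
  have moments: "mat_trace (?C ^\<^sub>m k) = complex_of_real (\<Sum>i<n. (t i) ^ k)" for k
    using mat_trace_pow_eq_sum_eigenvalues[OF complex_mat_of_carrier es(1)] by (simp add: es_real)
  show ?thesis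
  proof
    show "eigenvalue ?C (complex_of_real (t i))" if "i < n" for i
      using eigenvalue[OF that] es_real[OF that] by simp
    then show "\<bar>t i\<bar> \<le> 1" if "i < n" for i
      using eigenvalue_norm_le_1 that by fastforce
    show "(\<Sum>i<n. (t i)\<^sup>2) = (\<Sum>j<n. two_step j j)"
      using trans[OF moments[of 2, symmetric] mat_trace_complex_mat_pow_2] by (simp only: of_real_eq_iff)
    show "(\<Sum>i<n. (t i) ^ 4) = (\<Sum>i<n. \<Sum>k<n. two_step i k * two_step k i)"
      using trans[OF moments[of 4, symmetric] mat_trace_complex_mat_pow_4] by (simp only: of_real_eq_iff)
  qed
qed

theorem exists_real_eigenvalue_sq_le:
  assumes "0 < n" and entry_le: "\<And>i j. i < n \<Longrightarrow> j < n \<Longrightarrow> A i j \<le> 1 / d" and "3 \<le> d"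
  shows "\<exists>e. (\<exists>f. real_eigenvector n A e f) \<and> e\<^sup>2 \<le> (d - 1) / d\<^sup>2"
proof -
  obtain t where eigenvalue: "\<And>i. i < n \<Longrightarrow> eigenvalue (complex_mat_of n A) (complex_of_real (t i))"
    and bounded: "\<And>i. i < n \<Longrightarrow> \<bar>t i\<bar> \<le> 1"
    and second: "(\<Sum>i<n. (t i)\<^sup>2) = (\<Sum>j<n. two_step j j)"
    and fourth: "(\<Sum>i<n. (t i) ^ 4) = (\<Sum>i<n. \<Sum>k<n. two_step i k * two_step k i)"
    using real_spectrum by blast
  have "real n / d < n" using \<open>0 < n\<close> \<open>3 \<le> d\<close> by (simp add: divide_less_eq)
  then have "(\<Sum>i\<in>{..<n}. (t i)\<^sup>2) < card {..<n}"
    using second sum_two_step_diag_le[OF entry_le] by simp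
  moreover have "(1 + (d - 1) / d\<^sup>2) * (\<Sum>i\<in>{..<n}. (t i)\<^sup>2) - (d - 1) / d\<^sup>2 * card {..<n}
      \<le> (\<Sum>i\<in>{..<n}. (t i) ^ 4)"
    using sum_two_step_products_lower_bound[OF entry_le \<open>3 \<le> d\<close>] second fourth by simp
  ultimately obtain i where "i < n" "(t i)\<^sup>2 \<le> (d - 1) / d\<^sup>2"
    using exists_sq_le_of_moments[of "{..<n}" t] bounded by blast
  then show ?thesis
    using eigenvalue eigenvalue_of_real_iff_real_eigenvector by blast
qed

end

section \<open>The random walk on a graph\<close>

definition walk_matrix :: "'a set \<Rightarrow> ('a \<Rightarrow> 'a \<Rightarrow> bool) \<Rightarrow> (nat \<Rightarrow> 'a) \<Rightarrow> nat \<Rightarrow> nat \<Rightarrow> real" where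
  "walk_matrix V E g i j = (if E (g i) (g j) then 1 / real (deg V E (g i)) else 0)"

context
  fixes V :: "'a set" and E :: "'a \<Rightarrow> 'a \<Rightarrow> bool" and g :: "nat \<Rightarrow> 'a" and N :: nat
  assumes graph: "simple_graph V E" and enum: "bij_betw g {..<N} V"
begin

lemma sum_walk_matrix:
  assumes "i < N"
  shows "(\<Sum>j<N. walk_matrix V E g i j * F (g j)) = (\<Sum>u\<in>nbrs V E (g i). F u) / real (deg V E (g i))"
proof -
  have "(\<Sum>j<N. walk_matrix V E g i j * F (g j))
      = (\<Sum>j<N. if E (g i) (g j) then F (g j) / real (deg V E (g i)) else 0)"
    by (intro sum.cong) (simp_all add: walk_matrix_def)
  also have "\<dots> = (\<Sum>u\<in>V. if E (g i) u then F u / real (deg V E (g i)) else 0)"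
    by (rule sum.reindex_bij_betw[OF enum])
  also have "\<dots> = (\<Sum>u\<in>nbrs V E (g i). F u / real (deg V E (g i)))"
    using graph unfolding nbrs_def simple_graph_def by (simp add: sum.inter_filter)
  also have "\<dots> = (\<Sum>u\<in>nbrs V E (g i). F u) / real (deg V E (g i))"
    by (simp add: sum_divide_distrib)
  finally show ?thesis .
qed

lemma walk_matrix_reversible:
  assumes deg_pos: "\<And>v. v \<in> V \<Longrightarrow> 0 < deg V E v"
  shows "reversible_stochastic_matrix N (walk_matrix V E g) (\<lambda>i. real (deg V E (g i)))"
proof
  fix i j assume ij: "i < N" "j < N"
  then have "g i \<in> V" "g j \<in> V" using enum by (auto simp: bij_betw_def)
  then show "real (deg V E (g i)) * walk_matrix V E g i j = real (deg V E (g j)) * walk_matrix V E g j i"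
    using graph deg_pos unfolding walk_matrix_def simple_graph_def by auto
  show "0 \<le> walk_matrix V E g i j" by (simp add: walk_matrix_def)
next
  fix i assume i: "i < N"
  then have "g i \<in> V" using enum by (auto simp: bij_betw_def)
  then show "0 < real (deg V E (g i))" using deg_pos by simp
  show "(\<Sum>j<N. walk_matrix V E g i j) = 1"
    using sum_walk_matrix[OF i, of "\<lambda>_. 1"] deg_pos[OF \<open>g i \<in> V\<close>] by (simp add: deg_def)
qed

lemma lap_eigenvalue_iff_real_eigenvector:
  "lap_eigenvalue V E \<mu> \<longleftrightarrow> (\<exists>f. real_eigenvector N (walk_matrix V E g) (1 - \<mu>) f)"
proof
  assume "lap_eigenvalue V E \<mu>"
  then obtain F where nz: "\<exists>v\<in>V. F v \<noteq> 0" and eig: "\<forall>v\<in>V. norm_lap V E F v = \<mu> * F v"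
    unfolding lap_eigenvalue_def by blast
  have "\<exists>i<N. F (g i) \<noteq> 0"
    using nz enum by (auto simp: bij_betw_def)
  moreover have "(\<Sum>j<N. walk_matrix V E g i j * F (g j)) = (1 - \<mu>) * F (g i)" if "i < N" for i
    using sum_walk_matrix[OF that, of F] eig that enum
    by (auto simp: norm_lap_def bij_betw_def algebra_simps)
  ultimately show "\<exists>f. real_eigenvector N (walk_matrix V E g) (1 - \<mu>) f"
    unfolding real_eigenvector_def by (intro exI[of _ "\<lambda>i. F (g i)"]) blast
next
  assume "\<exists>f. real_eigenvector N (walk_matrix V E g) (1 - \<mu>) f"
  then obtain f where f: "real_eigenvector N (walk_matrix V E g) (1 - \<mu>) f" ..
  define F where "F v = f (inv_into {..<N} g v)" for v
  have F_g: "F (g j) = f j" if "j < N" for j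
    unfolding F_def using enum that by (simp add: bij_betw_inv_into_left)
  have "\<exists>v\<in>V. F v \<noteq> 0"
    using f F_g enum unfolding real_eigenvector_def by (metis bij_betwE lessThan_iff)
  moreover have "norm_lap V E F v = \<mu> * F v" if "v \<in> V" for v
  proof -
    have "v \<in> g ` {..<N}" using that enum by (simp add: bij_betw_def)
    then obtain i where i: "i < N" "v = g i" by blast
    have "(\<Sum>u\<in>nbrs V E v. F u) / real (deg V E v) = (\<Sum>j<N. walk_matrix V E g i j * f j)"
      using sum_walk_matrix[OF i(1), of F] F_g i by simp
    also have "\<dots> = (1 - \<mu>) * F v"
      using f i F_g unfolding real_eigenvector_def by simp
    finally show ?thesis by (simp add: norm_lap_def algebra_simps)
  qed
  ultimately show "lap_eigenvalue V E \<mu>"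
    unfolding lap_eigenvalue_def by blast
qed

lemma walk_matrix_le:
  fixes d :: real
  assumes deg_ge: "\<And>v. v \<in> V \<Longrightarrow> d \<le> deg V E v" and "0 < d" and "i < N"
  shows "walk_matrix V E g i j \<le> 1 / d"
proof -
  have "g i \<in> V" using enum \<open>i < N\<close> by (auto simp: bij_betw_def)
  then have "1 / real (deg V E (g i)) \<le> 1 / d"
    using deg_ge[of "g i"] \<open>0 < d\<close> by (intro divide_left_mono) auto
  then show ?thesis using \<open>0 < d\<close> by (simp add: walk_matrix_def)
qed

lemma spectral_eps_le:
  assumes "\<exists>f. real_eigenvector N (walk_matrix V E g) e f"
  shows "spectral_eps V E \<le> \<bar>e\<bar>"
proof -
  let ?S = "{\<bar>1 - \<mu>\<bar> | \<mu>. lap_eigenvalue V E \<mu>}"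
  have "?S \<subseteq> (\<lambda>z. \<bar>Re z\<bar>) ` {z. eigenvalue (complex_mat_of N (walk_matrix V E g)) z}"
    by (force simp: lap_eigenvalue_iff_real_eigenvector
        eigenvalue_of_real_iff_real_eigenvector[symmetric])
  then have "finite ?S"
    using finite_eigenvalues[OF complex_mat_of_carrier] finite_subset by blast
  moreover have "\<bar>e\<bar> \<in> ?S"
    using assms lap_eigenvalue_iff_real_eigenvector[of "1 - e"] by force
  ultimately show ?thesis unfolding spectral_eps_def by simp
qed

end

lemma spectral_eps_le_min_deg:
  fixes V :: "'a set" and E :: "'a \<Rightarrow> 'a \<Rightarrow> bool"
  assumes graph: "simple_graph V E" and "V \<noteq> {}" and min_deg: "3 \<le> min_deg V E"
  shows "spectral_eps V E \<le> sqrt (real (min_deg V E) - 1) / real (min_deg V E)"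
proof -
  define d where "d = real (min_deg V E)"
  have "3 \<le> d" using min_deg by (simp add: d_def)
  have "finite V" using graph by (simp add: simple_graph_def)
  then obtain g where enum: "bij_betw g {..<card V} V"
    using ex_bij_betw_nat_finite lessThan_atLeast0 by metis
  have deg_ge: "d \<le> deg V E v" if "v \<in> V" for v
    unfolding d_def min_deg_def using \<open>finite V\<close> that by simp
  have deg_pos: "0 < deg V E v" if "v \<in> V" for v
  proof -
    have "0 < real (deg V E v)" using deg_ge[OF that] \<open>3 \<le> d\<close> by linarith
    then show ?thesis by simp
  qed
  interpret reversible_stochastic_matrix "card V" "walk_matrix V E g" "\<lambda>i. real (deg V E (g i))"
    by (rule walk_matrix_reversible[OF graph enum deg_pos])
  have entry_le: "walk_matrix V E g i j \<le> 1 / d" if "i < card V" for i j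
    using walk_matrix_le[OF graph enum deg_ge] \<open>3 \<le> d\<close> that by simp
  have "0 < card V" using \<open>finite V\<close> \<open>V \<noteq> {}\<close> by (simp add: card_gt_0_iff)
  then obtain e where e: "\<exists>f. real_eigenvector (card V) (walk_matrix V E g) e f"
    and e_sq: "e\<^sup>2 \<le> (d - 1) / d\<^sup>2"
    using exists_real_eigenvalue_sq_le[OF _ entry_le \<open>3 \<le> d\<close>] by blast
  have "spectral_eps V E \<le> \<bar>e\<bar>" by (rule spectral_eps_le[OF graph enum e])
  also have "\<dots> \<le> sqrt ((d - 1) / d\<^sup>2)" using e_sq by (intro real_le_rsqrt) simp
  also have "\<dots> = sqrt (d - 1) / d" using \<open>3 \<le> d\<close> by (simp add: real_sqrt_divide)
  finally show ?thesis by (simp add: d_def)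
qed

lemma sqrt_pred_div_lt_half:
  fixes d :: real
  assumes "3 \<le> d"
  shows "sqrt (d - 1) / d < 1 / 2"
proof -
  have "0 < (d - 2) * (d - 2)" using assms by simp
  then have "d - 1 < (d / 2)\<^sup>2" by (simp add: power2_eq_square field_simps algebra_simps)
  then have "sqrt (d - 1) < d / 2"
    using assms real_sqrt_less_mono[of "d - 1" "(d / 2)\<^sup>2"] by simp
  then show ?thesis using assms by (simp add: divide_less_eq)
qed

theorem mainTheorem5:
  fixes V :: "'a set" and E :: "'a \<Rightarrow> 'a \<Rightarrow> bool"
  assumes "simple_graph V E"
    and "graph_connected V E"
    and "card V \<ge> 3"
    and "min_deg V E \<ge> 3"
  shows "spectral_eps V E \<le> sqrt (real (min_deg V E) - 1) / real (min_deg V E)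
       \<and> sqrt (real (min_deg V E) - 1) / real (min_deg V E) < 1 / 2"
proof
  have "V \<noteq> {}" using \<open>card V \<ge> 3\<close> by auto
  then show "spectral_eps V E \<le> sqrt (real (min_deg V E) - 1) / real (min_deg V E)"
    using spectral_eps_le_min_deg[OF \<open>simple_graph V E\<close>] \<open>min_deg V E \<ge> 3\<close> by simp
  show "sqrt (real (min_deg V E) - 1) / real (min_deg V E) < 1 / 2"
    using sqrt_pred_div_lt_half \<open>min_deg V E \<ge> 3\<close> by simp
qed

end
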